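(* Let $\mathcal{H}$ be a real Hilbert space, $A:\mathcal{H}\rightrightarrows\mathcal{H}$ maximal monotone, $p\geq2$ an integer and $\theta\in(0,1)$. Let $\Omega=\{x\in\mathcal{H}:0\notin Ax\}$ and, for $x\in\Omega$, let $\Lambda_\theta(x)$ be the unique $\lambda>0$ with $\lambda^{1/(p-1)}\|x-(I+\lambda A)^{-1}x\|=\theta^{1/(p-1)}$. Define on $\mathcal{H}$ \[ \Gamma_\theta(x)=\Big(\inf\{\alpha>0:\|x-(I+\alpha^{-1}A)^{-1}x\|\leq\alpha^{\frac1{p-1}}\theta^{\frac1{p-1}}\}\Big)^{\frac1{p-1}}. \] Then $\Gamma_\theta(x)=(1/\Lambda_\theta(x))^{1/(p-1)}$ if $x\in\Omega$ and $\Gamma_\theta(x)=0$ otherwise, and $\Gamma_\theta$ is Lipschitz continuous on $\mathcal{H}$ with constant $\theta^{-1/(p-1)}$.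
   Context: $(I+\lambda A)^{-1}$ is the resolvent of $A$ of index $\lambda>0$. For $x\in\Omega$, the map $\lambda\mapsto\lambda^{1/(p-1)}\|x-(I+\lambda A)^{-1}x\|$ is a continuous strictly increasing bijection of $[0,\infty)$ onto $[0,\infty)$, so $\Lambda_\theta$ is well defined. *)

theory Defs
  imports "HOL-Analysis.Analysis"
begin

definition monotone_operator :: "('a::real_inner \<Rightarrow> 'a set) \<Rightarrow> bool" where
  "monotone_operator A \<longleftrightarrow>
     (\<forall>x y u v. u \<in> A x \<longrightarrow> v \<in> A y \<longrightarrow> inner (x - y) (u - v) \<ge> 0)"

definition maximal_monotone :: "('a::real_inner \<Rightarrow> 'a set) \<Rightarrow> bool" where
  "maximal_monotone A \<longleftrightarrow> monotone_operator A \<and>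
     (\<forall>B. monotone_operator B \<and> (\<forall>x. A x \<subseteq> B x) \<longrightarrow> B = A)"

text \<open>Resolvent (I + lam A)^{-1} x: the y with x \<in> y + lam A y, i.e. (x - y)/lam \<in> A y.\<close>
definition resolvent :: "('a::real_inner \<Rightarrow> 'a set) \<Rightarrow> real \<Rightarrow> 'a \<Rightarrow> 'a" where
  "resolvent A lam x = (THE y. (1 / lam) *\<^sub>R (x - y) \<in> A y)"

definition Lambda_theta :: "('a::real_inner \<Rightarrow> 'a set) \<Rightarrow> nat \<Rightarrow> real \<Rightarrow> 'a \<Rightarrow> real" where
  "Lambda_theta A p \<theta> x = (THE lam. lam > 0 \<and>
      lam powr (1 / (real p - 1)) * norm (x - resolvent A lam x) = \<theta> powr (1 / (real p - 1)))"

definition Gamma_theta :: "('a::real_inner \<Rightarrow> 'a set) \<Rightarrow> nat \<Rightarrow> real \<Rightarrow> 'a \<Rightarrow> real" where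
  "Gamma_theta A p \<theta> x =
     (Inf {\<alpha>::real. \<alpha> > 0 \<and>
        norm (x - resolvent A (1 / \<alpha>) x) \<le> \<alpha> powr (1 / (real p - 1)) * \<theta> powr (1 / (real p - 1))})
     powr (1 / (real p - 1))"

end

theory Submission
  imports Defs
begin

text \<open>
  By Minty's theorem every resolvent \<open>J\<^sub>\<lambda> = (I + \<lambda>A)\<^sup>-\<^sup>1\<close> is defined on the whole space.
  Monotonicity of \<open>A\<close> makes the residual \<open>\<parallel>x - J\<^sub>\<lambda> x\<parallel>\<close> nondecreasing in \<open>\<lambda>\<close>,
  makes \<open>\<parallel>x - J\<^sub>\<lambda> x\<parallel> / \<lambda>\<close> nonincreasing, and makes \<open>x \<mapsto> x - J\<^sub>\<lambda> x\<close> nonexpansive.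
  Hence for \<open>0 \<notin> Ax\<close> the map \<open>\<lambda> \<mapsto> \<lambda>\<^sup>q \<parallel>x - J\<^sub>\<lambda> x\<parallel>\<close>, \<open>q = 1/(p-1)\<close>, is a continuous
  strictly increasing bijection of \<open>(0,\<infinity>)\<close>, and the set whose infimum defines \<open>\<Gamma>\<^sub>\<theta>(x)\<close>
  is the ray \<open>[1/\<Lambda>\<^sub>\<theta>(x), \<infinity>)\<close>. For the Lipschitz bound put \<open>T = \<Gamma>\<^sub>\<theta>(x) + \<theta>\<^sup>-\<^sup>q \<parallel>x - y\<parallel>\<close>
  and \<open>\<lambda> = T\<^sup>-\<^sup>1\<^sup>/\<^sup>q\<close>: then \<open>\<parallel>x - J\<^sub>\<lambda> x\<parallel> \<le> \<theta>\<^sup>q \<Gamma>\<^sub>\<theta>(x)\<close>, nonexpansiveness gives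
  \<open>\<parallel>y - J\<^sub>\<lambda> y\<parallel> \<le> \<theta>\<^sup>q T\<close>, and this says \<open>\<Gamma>\<^sub>\<theta>(y) \<le> T\<close>.

  Minty's theorem itself is proved from a finite-dimensional minimax lemma together with
  the finite intersection property of bounded closed convex sets in a Hilbert space; the
  latter replaces weak compactness and is obtained from minimal-norm points.
\<close>

section \<open>Intersections of closed convex sets in Hilbert space\<close>

lemma Cauchy_if_dist_le_tendsto_zero:
  fixes f :: "nat \<Rightarrow> 'a::metric_space"
  assumes dist_le: "\<And>m n. m \<le> n \<Longrightarrow> dist (f m) (f n) \<le> \<delta> m" and "\<delta> \<longlonglongrightarrow> 0"
  shows "Cauchy f"
proof (rule metric_CauchyI)
  fix e :: real assume "e > 0"
  then obtain M where M: "\<And>n. n \<ge> M \<Longrightarrow> norm (\<delta> n - 0) < e / 2"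
    using LIMSEQ_D[OF \<open>\<delta> \<longlonglongrightarrow> 0\<close>, of "e / 2"] by auto
  have "dist (f m) (f n) < e" if "m \<ge> M" "n \<ge> M" for m n
  proof -
    have "dist (f m) (f n) \<le> dist (f M) (f m) + dist (f M) (f n)" by (rule dist_triangle3)
    also have "\<dots> \<le> 2 * \<delta> M" using dist_le[OF that(1)] dist_le[OF that(2)] by linarith
    also have "\<dots> < e" using M[of M] by simp
    finally show ?thesis .
  qed
  then show "\<exists>M. \<forall>m\<ge>M. \<forall>n\<ge>M. dist (f m) (f n) < e" by blast
qed

lemma convex_near_min_norm_dist:
  fixes D :: "'a::real_inner set"
  assumes "convex D" and "y \<in> D" and "z \<in> D" and lower: "\<And>w. w \<in> D \<Longrightarrow> r \<le> (norm w)\<^sup>2"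
    and "(norm y)\<^sup>2 \<le> r + e" and "(norm z)\<^sup>2 \<le> r + e"
  shows "(norm (y - z))\<^sup>2 \<le> 4 * e"
proof -
  have "(1/2) *\<^sub>R y + (1/2) *\<^sub>R z \<in> D"
    using assms(1-3) by (auto intro: convexD)
  then have "r \<le> (norm ((1/2) *\<^sub>R (y + z)))\<^sup>2"
    using lower by (simp add: scaleR_add_right)
  then have "4 * r \<le> (norm (y + z))\<^sup>2"
    by (simp add: power_divide)
  moreover have "(norm (y - z))\<^sup>2 + (norm (y + z))\<^sup>2 = 2 * (norm y)\<^sup>2 + 2 * (norm z)\<^sup>2"
    by (simp add: power2_norm_eq_inner inner_add_left inner_add_right inner_diff_left inner_diff_right inner_commute)
  ultimately show ?thesis using assms(5,6) by linarith
qed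

lemma decseq_convex_near_min_norm_limit:
  fixes C :: "nat \<Rightarrow> 'a::{real_inner,complete_space} set"
  assumes convex: "\<And>n. convex (C n)" and "decseq C"
    and lower: "\<And>n w. w \<in> C n \<Longrightarrow> s - \<epsilon> n \<le> (norm w)\<^sup>2"
    and "decseq \<epsilon>" and "\<epsilon> \<longlonglongrightarrow> 0"
    and ys: "\<And>n. ys n \<in> C n" "\<And>n. (norm (ys n))\<^sup>2 \<le> s + \<epsilon> n"
  obtains y where "\<And>zs. (\<And>n. zs n \<in> C n) \<Longrightarrow> (\<And>n. (norm (zs n))\<^sup>2 \<le> s + \<epsilon> n) \<Longrightarrow> zs \<longlonglongrightarrow> y"
proof -
  define \<delta> where "\<delta> n = sqrt (8 * \<epsilon> n)" for n
  have "\<delta> \<longlonglongrightarrow> 0"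
    unfolding \<delta>_def using tendsto_real_sqrt[OF tendsto_mult_right_zero[OF \<open>\<epsilon> \<longlonglongrightarrow> 0\<close>]] by simp
  have close: "dist y z \<le> \<delta> n"
    if "y \<in> C n" "z \<in> C n" "(norm y)\<^sup>2 \<le> s + \<epsilon> n" "(norm z)\<^sup>2 \<le> s + \<epsilon> n" for y z n
  proof -
    have "(norm (y - z))\<^sup>2 \<le> 4 * (2 * \<epsilon> n)"
      using that convex lower by (intro convex_near_min_norm_dist[where r = "s - \<epsilon> n"]) auto
    then show ?thesis unfolding \<delta>_def dist_norm by (intro real_le_rsqrt) simp
  qed
  have "Cauchy ys"
  proof (rule Cauchy_if_dist_le_tendsto_zero[OF _ \<open>\<delta> \<longlonglongrightarrow> 0\<close>])
    fix m n :: nat assume "m \<le> n"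
    then have "C n \<subseteq> C m" "\<epsilon> n \<le> \<epsilon> m" using \<open>decseq C\<close> \<open>decseq \<epsilon>\<close> by (auto simp: decseq_def)
    then have "ys n \<in> C m" "(norm (ys n))\<^sup>2 \<le> s + \<epsilon> m" using ys[of n] by auto
    then show "dist (ys m) (ys n) \<le> \<delta> m" using ys by (intro close) auto
  qed
  then obtain y where y: "ys \<longlonglongrightarrow> y" using Cauchy_convergent_iff convergent_def by blast
  have "zs \<longlonglongrightarrow> y" if "\<And>n. zs n \<in> C n" "\<And>n. (norm (zs n))\<^sup>2 \<le> s + \<epsilon> n" for zs
  proof -
    have "norm (zs n - ys n) \<le> \<delta> n" for n
      using close[of "zs n" n "ys n"] that ys by (auto simp: dist_norm)
    then have "(\<lambda>n. zs n - ys n) \<longlonglongrightarrow> 0"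
      by (intro Lim_null_comparison[OF _ \<open>\<delta> \<longlonglongrightarrow> 0\<close>]) auto
    with y show "zs \<longlonglongrightarrow> y" by (rule Lim_transform)
  qed
  then show ?thesis by (rule that)
qed

text \<open>Here \<open>s\<close> is the supremum, over finite \<open>F\<close>, of the squared distance from \<open>0\<close> to \<open>D F\<close>,
  and the sets \<open>D (Gs n)\<close> nearly attain it.\<close>
lemma antimono_family_near_min_norm:
  fixes D :: "'i set \<Rightarrow> 'a::real_normed_vector set"
  assumes antimono: "\<And>F G. F \<subseteq> G \<Longrightarrow> D G \<subseteq> D F"
    and nonempty: "\<And>F. finite F \<Longrightarrow> F \<subseteq> I \<Longrightarrow> D F \<noteq> {}" and "bounded (D {})"
  obtains Gs s where "\<And>n. finite (Gs n)" "\<And>n. Gs n \<subseteq> I" "\<And>m n. m \<le> n \<Longrightarrow> Gs m \<subseteq> Gs n"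
    and "\<And>n w. w \<in> D (Gs n) \<Longrightarrow> s - inverse (Suc n) \<le> (norm w)\<^sup>2"
    and "\<And>F n. finite F \<Longrightarrow> F \<subseteq> I \<Longrightarrow> \<exists>z\<in>D F. (norm z)\<^sup>2 \<le> s + inverse (Suc n)"
proof -
  define \<F> where "\<F> = {F. finite F \<and> F \<subseteq> I}"
  define r where "r F = Inf ((\<lambda>z. (norm z)\<^sup>2) ` D F)" for F
  define s where "s = Sup (r ` \<F>)"
  obtain B where B: "\<And>z. z \<in> D {} \<Longrightarrow> norm z \<le> B" using \<open>bounded (D {})\<close> bounded_iff by blast
  have bdd: "bdd_below ((\<lambda>z. (norm z)\<^sup>2) ` D F)" for F by (rule bdd_belowI[of _ 0]) auto
  have r_le: "r F \<le> (norm z)\<^sup>2" if "z \<in> D F" for F z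
    unfolding r_def using that bdd by (intro cInf_lower) auto
  have "bdd_above (r ` \<F>)"
  proof (rule bdd_aboveI2)
    fix F assume "F \<in> \<F>"
    then obtain z where "z \<in> D F" using nonempty unfolding \<F>_def by auto
    then have "r F \<le> (norm z)\<^sup>2" by (rule r_le)
    also have "\<dots> \<le> B\<^sup>2" using B[of z] \<open>z \<in> D F\<close> antimono[of "{}" F] by (intro power_mono) auto
    finally show "r F \<le> B\<^sup>2" .
  qed
  have near_min: "\<exists>z\<in>D F. (norm z)\<^sup>2 \<le> s + inverse (Suc n)" if "F \<in> \<F>" for F n
  proof -
    have "r F \<le> s" unfolding s_def using that \<open>bdd_above (r ` \<F>)\<close> by (intro cSup_upper) auto
    moreover have "0 < inverse (real (Suc n))" by simp
    ultimately have "Inf ((\<lambda>z. (norm z)\<^sup>2) ` D F) < s + inverse (Suc n)"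
      unfolding r_def by linarith
    then show ?thesis using nonempty that bdd unfolding \<F>_def
      by (subst (asm) cInf_less_iff) (auto intro: less_imp_le)
  qed
  have "\<exists>F\<in>\<F>. s - inverse (Suc n) < r F" for n
  proof -
    have "{} \<in> \<F>" unfolding \<F>_def by simp
    moreover have "s - inverse (Suc n) < s" by simp
    ultimately show ?thesis unfolding s_def using \<open>bdd_above (r ` \<F>)\<close>
      by (subst (asm) less_cSup_iff) auto
  qed
  then obtain Fs where Fs: "\<And>n. Fs n \<in> \<F>" "\<And>n. s - inverse (Suc n) < r (Fs n)" by metis
  define Gs where "Gs n = (\<Union>k\<le>n. Fs k)" for n
  show ?thesis
  proof
    show "finite (Gs n)" "Gs n \<subseteq> I" for n using Fs(1) unfolding Gs_def \<F>_def by auto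
    show "Gs m \<subseteq> Gs n" if "m \<le> n" for m n using that unfolding Gs_def by force
    show "s - inverse (Suc n) \<le> (norm w)\<^sup>2" if "w \<in> D (Gs n)" for n w
      using that antimono[of "Fs n" "Gs n"] Fs(2)[of n] r_le[of w "Fs n"] unfolding Gs_def by force
    show "\<exists>z\<in>D F. (norm z)\<^sup>2 \<le> s + inverse (Suc n)" if "finite F" "F \<subseteq> I" for F n
      using near_min that unfolding \<F>_def by blast
  qed
qed

lemma bounded_closed_convex_fip:
  fixes K :: "'i \<Rightarrow> 'a::{real_inner,complete_space} set"
  assumes closed: "closed S" "\<And>i. i \<in> I \<Longrightarrow> closed (K i)"
    and convex: "convex S" "\<And>i. i \<in> I \<Longrightarrow> convex (K i)"
    and "bounded S"
    and fip: "\<And>F. finite F \<Longrightarrow> F \<subseteq> I \<Longrightarrow> S \<inter> (\<Inter>i\<in>F. K i) \<noteq> {}"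
  shows "S \<inter> (\<Inter>i\<in>I. K i) \<noteq> {}"
proof -
  define D where "D F = S \<inter> (\<Inter>i\<in>F. K i)" for F
  have D_antimono: "D G \<subseteq> D F" if "F \<subseteq> G" for F G using that unfolding D_def by auto
  have D_ne: "D F \<noteq> {}" if "finite F" "F \<subseteq> I" for F using fip[OF that] unfolding D_def .
  have D_bounded: "bounded (D {})" using \<open>bounded S\<close> by (simp add: D_def)
  obtain Gs s where Gs: "\<And>n. finite (Gs n)" "\<And>n. Gs n \<subseteq> I" "\<And>m n. m \<le> n \<Longrightarrow> Gs m \<subseteq> Gs n"
    and lower: "\<And>n w. w \<in> D (Gs n) \<Longrightarrow> s - inverse (Suc n) \<le> (norm w)\<^sup>2"
    and near_min: "\<And>F n. finite F \<Longrightarrow> F \<subseteq> I \<Longrightarrow> \<exists>z\<in>D F. (norm z)\<^sup>2 \<le> s + inverse (Suc n)"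
    using antimono_family_near_min_norm[where D = D and I = I] D_antimono D_ne D_bounded by (metis (mono_tags))
  have "\<forall>n. \<exists>z\<in>D (Gs n). (norm z)\<^sup>2 \<le> s + inverse (Suc n)" using near_min Gs by blast
  then obtain ys where ys: "\<And>n. ys n \<in> D (Gs n)" "\<And>n. (norm (ys n))\<^sup>2 \<le> s + inverse (Suc n)"
    by metis
  have "convex (D (Gs n))" for n
    using Gs(2)[of n] convex unfolding D_def by (intro convex_Int convex_INT) auto
  moreover have "decseq (\<lambda>n. D (Gs n))" using Gs(3) D_antimono by (auto simp: decseq_def)
  moreover have "decseq (\<lambda>n. inverse (real (Suc n)))" by (intro decseq_SucI) (simp add: le_imp_inverse_le)
  ultimately obtain y where lim: "\<And>zs. (\<And>n. zs n \<in> D (Gs n)) \<Longrightarrow>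
      (\<And>n. (norm (zs n))\<^sup>2 \<le> s + inverse (Suc n)) \<Longrightarrow> zs \<longlonglongrightarrow> y"
    using decseq_convex_near_min_norm_limit[where C = "\<lambda>n. D (Gs n)", OF _ _ lower _
        LIMSEQ_inverse_real_of_nat ys] by blast
  have "y \<in> S" using lim[OF ys] ys(1) closed(1) unfolding D_def by (auto intro: closed_sequentially)
  moreover have "y \<in> K i" if "i \<in> I" for i
  proof -
    have "\<forall>n. \<exists>z\<in>D (insert i (Gs n)). (norm z)\<^sup>2 \<le> s + inverse (Suc n)"
      using near_min Gs that by blast
    then obtain zs where zs: "\<And>n. zs n \<in> D (insert i (Gs n))" "\<And>n. (norm (zs n))\<^sup>2 \<le> s + inverse (Suc n)"
      by metis
    have "zs n \<in> D (Gs n)" for n using zs(1)[of n] D_antimono[of "Gs n" "insert i (Gs n)"] by blast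
    then have "zs \<longlonglongrightarrow> y" using zs(2) by (rule lim)
    moreover have "zs n \<in> K i" for n using zs(1) unfolding D_def by auto
    ultimately show ?thesis using closed(2)[OF that] by (auto intro: closed_sequentially)
  qed
  ultimately show ?thesis by blast
qed

section \<open>A finite-dimensional minimax lemma\<close>

lemma convex_max_quadratic_slope_nonpos:
  fixes g :: "'a::real_vector \<Rightarrow> real"
  assumes "convex K" and "q \<in> K" and "p \<in> K" and max: "\<And>q'. q' \<in> K \<Longrightarrow> g q' \<le> g q"
    and expand: "\<And>t. g ((1 - t) *\<^sub>R q + t *\<^sub>R p) = g q + t * X - t\<^sup>2 * c"
  shows "X \<le> 0"
proof (rule ccontr)
  assume "\<not> X \<le> 0"
  define t where "t = min 1 (X / (\<bar>c\<bar> + 1))"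
  have "0 < t" "t \<le> 1" using \<open>\<not> X \<le> 0\<close> unfolding t_def by auto
  then have "(1 - t) *\<^sub>R q + t *\<^sub>R p \<in> K" using assms(1-3) by (intro convexD_alt) auto
  then have "t * X \<le> t\<^sup>2 * c" using max expand[of t] by force
  then have "X \<le> t * c" using \<open>0 < t\<close> by (simp add: power2_eq_square mult.assoc)
  also have "\<dots> \<le> t * \<bar>c\<bar>" using \<open>0 < t\<close> by (simp add: mult_left_mono)
  also have "\<dots> \<le> X / (\<bar>c\<bar> + 1) * \<bar>c\<bar>" unfolding t_def by (intro mult_right_mono) auto
  also have "\<dots> < X" using \<open>\<not> X \<le> 0\<close> by (simp add: field_simps)
  finally show False by simp
qed

lemma monotone_inner_convex_combination_le:
  fixes S :: "('a::real_inner \<times> 'a) set" and \<mu> :: "'a \<times> 'a \<Rightarrow> real"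
  assumes "finite S" and nonneg: "\<And>s. s \<in> S \<Longrightarrow> 0 \<le> \<mu> s" and "sum \<mu> S = 1"
    and monotone: "\<And>a b a' b'. (a, b) \<in> S \<Longrightarrow> (a', b') \<in> S \<Longrightarrow> inner (a - a') (b - b') \<ge> 0"
  shows "inner (\<Sum>s\<in>S. \<mu> s *\<^sub>R fst s) (\<Sum>s\<in>S. \<mu> s *\<^sub>R snd s) \<le> (\<Sum>s\<in>S. \<mu> s * inner (fst s) (snd s))"
proof -
  define M where "M f = (\<Sum>s\<in>S. \<Sum>t\<in>S. \<mu> s * \<mu> t * f s t)" for f :: "'a \<times> 'a \<Rightarrow> 'a \<times> 'a \<Rightarrow> real"
  have M_swap: "M f = M (\<lambda>s t. f t s)" for f unfolding M_def by (subst sum.swap) (simp add: ac_simps)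
  have "0 \<le> M (\<lambda>s t. inner (fst s - fst t) (snd s - snd t))"
    unfolding M_def using nonneg monotone by (intro sum_nonneg mult_nonneg_nonneg) (auto simp: case_prod_beta)
  also have "\<dots> = M (\<lambda>s t. inner (fst s) (snd s)) + M (\<lambda>s t. inner (fst t) (snd t))
      - M (\<lambda>s t. inner (fst s) (snd t)) - M (\<lambda>s t. inner (fst t) (snd s))"
    unfolding M_def by (simp add: inner_diff_left inner_diff_right algebra_simps sum.distrib sum_subtractf)
  finally have "0 \<le> 2 * M (\<lambda>s t. inner (fst s) (snd s)) - 2 * M (\<lambda>s t. inner (fst t) (snd s))"
    using M_swap[of "\<lambda>s t. inner (fst s) (snd s)"] M_swap[of "\<lambda>s t. inner (fst t) (snd s)"] by simp
  moreover have "M (\<lambda>s t. inner (fst s) (snd s)) = (\<Sum>s\<in>S. \<mu> s * inner (fst s) (snd s))"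
    unfolding M_def using \<open>sum \<mu> S = 1\<close>
    by (simp add: sum_distrib_right[symmetric] sum_distrib_left[symmetric] mult.commute mult.left_commute)
  moreover have "M (\<lambda>s t. inner (fst t) (snd s)) = inner (\<Sum>s\<in>S. \<mu> s *\<^sub>R fst s) (\<Sum>s\<in>S. \<mu> s *\<^sub>R snd s)"
    unfolding M_def by (simp add: inner_sum_left inner_sum_right sum_distrib_left mult.assoc)
  ultimately show ?thesis by simp
qed

lemma monotone_convex_hull_lift_inner_le:
  fixes S :: "('a::real_inner \<times> 'a) set"
  assumes "finite S"
    and monotone: "\<And>a b a' b'. (a, b) \<in> S \<Longrightarrow> (a', b') \<in> S \<Longrightarrow> inner (a - a') (b - b') \<ge> 0"
    and "q \<in> convex hull ((\<lambda>(a, b). (a, b, inner a b)) ` S)"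
  shows "inner (fst q) (fst (snd q)) \<le> snd (snd q)"
proof -
  define f :: "'a \<times> 'a \<Rightarrow> 'a \<times> 'a \<times> real" where "f = (\<lambda>(a, b). (a, b, inner a b))"
  have "inj_on f S" unfolding f_def inj_on_def by auto
  obtain u where u: "\<forall>x\<in>f ` S. 0 \<le> u x" "sum u (f ` S) = 1" "(\<Sum>x\<in>f ` S. u x *\<^sub>R x) = q"
    using assms(3) \<open>finite S\<close> unfolding f_def[symmetric] by (auto simp: convex_hull_finite)
  have q: "q = (\<Sum>s\<in>S. u (f s) *\<^sub>R f s)" using u(3) by (simp add: sum.reindex[OF \<open>inj_on f S\<close>])
  have "inner (\<Sum>s\<in>S. u (f s) *\<^sub>R fst s) (\<Sum>s\<in>S. u (f s) *\<^sub>R snd s) \<le> (\<Sum>s\<in>S. u (f s) * inner (fst s) (snd s))"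
    using \<open>finite S\<close> u(1,2) monotone
    by (intro monotone_inner_convex_combination_le) (auto simp: sum.reindex[OF \<open>inj_on f S\<close>])
  then show ?thesis unfolding q fst_sum snd_sum by (simp add: f_def case_prod_beta)
qed

text \<open>The point \<open>y\<close> comes from a maximiser \<open>(a\<^sub>0, b\<^sub>0, c\<^sub>0)\<close> of the concave function
  \<open>-\<parallel>a - b\<parallel>\<^sup>2/4 - c\<close> on the convex hull of the points \<open>(a, b, \<langle>a, b\<rangle>)\<close>: monotonicity makes the
  maximum nonpositive, \<open>y = (a\<^sub>0 - b\<^sub>0)/2\<close>, and the claim is the first-order condition.\<close>
lemma finite_monotone_ex_inner_le_0:
  fixes S :: "('a::real_inner \<times> 'a) set"
  assumes "finite S"
    and monotone: "\<And>a b a' b'. (a, b) \<in> S \<Longrightarrow> (a', b') \<in> S \<Longrightarrow> inner (a - a') (b - b') \<ge> 0"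
  shows "\<exists>y. \<forall>(a, b)\<in>S. inner (y - a) (y + b) \<le> 0"
proof (cases "S = {}")
  case False
  define f :: "'a \<times> 'a \<Rightarrow> 'a \<times> 'a \<times> real" where "f = (\<lambda>(a, b). (a, b, inner a b))"
  define K where "K = convex hull (f ` S)"
  define G :: "'a \<times> 'a \<times> real \<Rightarrow> real" where
    "G = (\<lambda>(a, b, c). - (norm (a - b))\<^sup>2 / 4 - c)"
  have "compact K" unfolding K_def using \<open>finite S\<close> by (simp add: finite_imp_compact_convex_hull)
  moreover have "K \<noteq> {}" unfolding K_def using False by simp
  moreover have "continuous_on K G" unfolding G_def case_prod_beta by (intro continuous_intros) auto
  ultimately obtain q where "q \<in> K" and max: "\<And>q'. q' \<in> K \<Longrightarrow> G q' \<le> G q"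
    using continuous_attains_sup by metis
  obtain qa qb qc where q: "q = (qa, qb, qc)" by (cases q) auto
  have "inner qa qb \<le> qc"
    using monotone_convex_hull_lift_inner_le[OF \<open>finite S\<close> monotone] \<open>q \<in> K\<close>
    unfolding K_def f_def q by fastforce
  moreover have "(norm (qa + qb))\<^sup>2 = (norm (qa - qb))\<^sup>2 + 4 * inner qa qb"
    by (simp add: power2_norm_eq_inner inner_add_left inner_add_right inner_diff_left inner_diff_right inner_commute)
  ultimately have "G q \<le> 0" unfolding G_def q using zero_le_power2[of "norm (qa + qb)"] by simp
  define y where "y = (1/2) *\<^sub>R (qa - qb)"
  have "inner (y - a) (y + b) \<le> 0" if "(a, b) \<in> S" for a b
  proof -
    define E where "E = (a - b) - (qa - qb)"
    define X where "X = - inner (qa - qb) E / 2 - (inner a b - qc)"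
    have expand: "G ((1 - t) *\<^sub>R q + t *\<^sub>R f (a, b)) = G q + t * X - t\<^sup>2 * ((norm E)\<^sup>2 / 4)" for t
    proof -
      have "(1 - t) *\<^sub>R q + t *\<^sub>R f (a, b) = (qa + t *\<^sub>R (a - qa), qb + t *\<^sub>R (b - qb), qc + t * (inner a b - qc))"
        unfolding q f_def by (simp add: algebra_simps)
      moreover have "qa + t *\<^sub>R (a - qa) - (qb + t *\<^sub>R (b - qb)) = (qa - qb) + t *\<^sub>R E"
        unfolding E_def by (simp add: algebra_simps)
      moreover have "(norm ((qa - qb) + t *\<^sub>R E))\<^sup>2 = (norm (qa - qb))\<^sup>2 + 2 * t * inner (qa - qb) E + t\<^sup>2 * (norm E)\<^sup>2"
        unfolding power2_norm_eq_inner by (simp add: inner_commute algebra_simps power2_eq_square)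
      ultimately show ?thesis unfolding G_def q X_def by (simp add: field_simps)
    qed
    have "convex K" unfolding K_def by simp
    moreover have "f (a, b) \<in> K" unfolding K_def using \<open>(a, b) \<in> S\<close> by (intro hull_inc) auto
    ultimately have "X \<le> 0" by (rule convex_max_quadratic_slope_nonpos[OF _ \<open>q \<in> K\<close> _ max expand])
    moreover have "inner (y - a) (y + b) = G q + X"
      unfolding y_def G_def q X_def E_def
      by (simp add: power2_norm_eq_inner inner_add_left inner_add_right inner_diff_left inner_diff_right inner_commute field_simps)
    ultimately show ?thesis using \<open>G q \<le> 0\<close> by simp
  qed
  then show ?thesis by blast
qed simp

section \<open>Minty's theorem\<close>

lemma maximal_monotone_memI:
  assumes "maximal_monotone A" and related: "\<And>a b. b \<in> A a \<Longrightarrow> inner (y - a) (v - b) \<ge> 0"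
  shows "v \<in> A y"
proof -
  define B where "B = A(y := insert v (A y))"
  have "monotone_operator A" using assms(1) unfolding maximal_monotone_def by simp
  have related': "inner (a - y) (b - v) \<ge> 0" if "b \<in> A a" for a b
    using related[OF that] by (simp add: inner_diff_left inner_diff_right)
  have "monotone_operator B" unfolding monotone_operator_def
  proof (intro allI impI)
    fix x1 x2 u1 u2 assume "u1 \<in> B x1" "u2 \<in> B x2"
    then consider "u1 \<in> A x1" "u2 \<in> A x2" | "x1 = y" "u1 = v" "u2 \<in> A x2"
      | "u1 \<in> A x1" "x2 = y" "u2 = v" | "x1 = y" "u1 = v" "x2 = y" "u2 = v"
      unfolding B_def by (auto split: if_splits)
    then show "inner (x1 - x2) (u1 - u2) \<ge> 0"
      by cases (use \<open>monotone_operator A\<close> related related' in \<open>auto simp: monotone_operator_def\<close>)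
  qed
  then have "B = A" using assms(1) unfolding maximal_monotone_def B_def by auto
  then show ?thesis unfolding B_def by (metis fun_upd_same insertI1)
qed

lemma inner_le_0_iff_mem_cball:
  fixes y a c :: "'a::real_inner"
  shows "inner (y - a) (y + c) \<le> 0 \<longleftrightarrow> y \<in> cball ((1/2) *\<^sub>R (a - c)) (norm (a + c) / 2)"
proof -
  have "inner (y - a) (y + c) = (norm ((1/2) *\<^sub>R (a - c) - y))\<^sup>2 - (norm (a + c) / 2)\<^sup>2"
    unfolding power2_norm_eq_inner power_divide
    by (simp add: inner_commute algebra_simps power2_eq_square)
  then show ?thesis by (simp add: dist_norm abs_le_square_iff[symmetric])
qed

lemma monotone_ex_inner_le_0:
  fixes S :: "('a::{real_inner,complete_space} \<times> 'a) set"
  assumes monotone: "\<And>a b a' b'. (a, b) \<in> S \<Longrightarrow> (a', b') \<in> S \<Longrightarrow> inner (a - a') (b - b') \<ge> 0"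
  shows "\<exists>y. \<forall>(a, b)\<in>S. inner (y - a) (y + b) \<le> 0"
proof (cases "S = {}")
  case False
  then obtain s0 where "s0 \<in> S" by blast
  define K :: "'a \<times> 'a \<Rightarrow> 'a set" where "K = (\<lambda>(a, b). cball ((1/2) *\<^sub>R (a - b)) (norm (a + b) / 2))"
  have K: "closed (K s)" "convex (K s)" "bounded (K s)" for s by (cases s, simp add: K_def)+
  have "K s0 \<inter> (\<Inter>s\<in>S. K s) \<noteq> {}"
  proof (rule bounded_closed_convex_fip[OF K(1) K(1) K(2) K(2) K(3)])
    fix F assume "finite F" "F \<subseteq> S"
    then have "finite (insert s0 F)" "insert s0 F \<subseteq> S" using \<open>s0 \<in> S\<close> by auto
    moreover have "inner (a - a') (b - b') \<ge> 0"
      if "(a, b) \<in> insert s0 F" "(a', b') \<in> insert s0 F" for a b a' b'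
      using that \<open>insert s0 F \<subseteq> S\<close> monotone by blast
    ultimately obtain y where y: "\<forall>(a, b)\<in>insert s0 F. inner (y - a) (y + b) \<le> 0"
      using finite_monotone_ex_inner_le_0[of "insert s0 F"] by blast
    have "y \<in> K s" if "s \<in> insert s0 F" for s
      using y that unfolding K_def by (auto simp: inner_le_0_iff_mem_cball)
    then show "K s0 \<inter> (\<Inter>s\<in>F. K s) \<noteq> {}" by blast
  qed
  then obtain y where "\<And>s. s \<in> S \<Longrightarrow> y \<in> K s" by blast
  then have "inner (y - a) (y + b) \<le> 0" if "(a, b) \<in> S" for a b
    using that by (force simp: K_def inner_le_0_iff_mem_cball)
  then show ?thesis by blast
qed simp

text \<open>By maximality, \<open>(1/\<lambda>)(x - y) \<in> A y\<close> as soon as \<open>\<langle>y - a, y + \<lambda>b - x\<rangle> \<le> 0\<close> for all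
  \<open>b \<in> A a\<close>, and the pairs \<open>(a, \<lambda>b - x)\<close> form a monotone set.\<close>
theorem Minty_surjectivity:
  fixes A :: "'a::{real_inner,complete_space} \<Rightarrow> 'a set"
  assumes "maximal_monotone A" and "lam > 0"
  shows "\<exists>y. (1/lam) *\<^sub>R (x - y) \<in> A y"
proof -
  have "monotone_operator A" using assms(1) unfolding maximal_monotone_def by simp
  define S where "S = {(a, lam *\<^sub>R b - x) | a b. b \<in> A a}"
  have S_monotone: "inner (a - a') (c - c') \<ge> 0" if in_S: "(a, c) \<in> S" "(a', c') \<in> S" for a c a' c'
  proof -
    obtain b b' where "b \<in> A a" "b' \<in> A a'" "c = lam *\<^sub>R b - x" "c' = lam *\<^sub>R b' - x"
      using in_S unfolding S_def by auto
    moreover have "lam *\<^sub>R b - x - (lam *\<^sub>R b' - x) = lam *\<^sub>R (b - b')" by (simp add: algebra_simps)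
    ultimately show ?thesis
      using \<open>monotone_operator A\<close> \<open>lam > 0\<close> unfolding monotone_operator_def by simp
  qed
  obtain y where y: "\<forall>(a, c)\<in>S. inner (y - a) (y + c) \<le> 0"
    using monotone_ex_inner_le_0[OF S_monotone] by blast
  have "inner (y - a) ((1/lam) *\<^sub>R (x - y) - b) \<ge> 0" if "b \<in> A a" for a b
  proof -
    have "inner (y - a) (y + (lam *\<^sub>R b - x)) \<le> 0" using y that unfolding S_def by blast
    moreover have "(1/lam) *\<^sub>R (x - y) - b = (- 1/lam) *\<^sub>R (y + (lam *\<^sub>R b - x))"
      using \<open>lam > 0\<close> by (simp add: algebra_simps)
    ultimately show ?thesis using \<open>lam > 0\<close> by (simp add: divide_nonpos_pos)
  qed
  then show ?thesis using maximal_monotone_memI[OF assms(1)] by blast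
qed

section \<open>Resolvents\<close>

lemma resolvent_unique:
  assumes "monotone_operator A" and "lam > 0"
    and "(1/lam) *\<^sub>R (x - y) \<in> A y" and "(1/lam) *\<^sub>R (x - z) \<in> A z"
  shows "y = z"
proof -
  have "0 \<le> inner (y - z) ((1/lam) *\<^sub>R (x - y) - (1/lam) *\<^sub>R (x - z))"
    using assms(1,3,4) unfolding monotone_operator_def by blast
  also have "(1/lam) *\<^sub>R (x - y) - (1/lam) *\<^sub>R (x - z) = - ((1/lam) *\<^sub>R (y - z))"
    by (simp add: algebra_simps)
  finally have "0 \<le> - (1/lam) * inner (y - z) (y - z)" by simp
  then have "inner (y - z) (y - z) \<le> 0" using \<open>lam > 0\<close> by (simp add: divide_le_0_iff)
  then have "inner (y - z) (y - z) = 0" using inner_ge_zero[of "y - z"] by linarith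
  then show ?thesis by (simp only: inner_eq_zero_iff right_minus_eq)
qed

lemma resolvent_in:
  fixes A :: "'a::{real_inner,complete_space} \<Rightarrow> 'a set"
  assumes "maximal_monotone A" and "lam > 0"
  shows "(1/lam) *\<^sub>R (x - resolvent A lam x) \<in> A (resolvent A lam x)"
proof -
  have "monotone_operator A" using assms(1) unfolding maximal_monotone_def by simp
  then have "\<exists>!y. (1/lam) *\<^sub>R (x - y) \<in> A y"
    using Minty_surjectivity[OF assms] resolvent_unique[OF _ \<open>lam > 0\<close>] by blast
  then show ?thesis unfolding resolvent_def by (rule theI')
qed

lemma resolvent_eqI:
  fixes A :: "'a::{real_inner,complete_space} \<Rightarrow> 'a set"
  assumes "maximal_monotone A" and "lam > 0" and "(1/lam) *\<^sub>R (x - y) \<in> A y"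
  shows "resolvent A lam x = y"
  using assms resolvent_in resolvent_unique unfolding maximal_monotone_def by blast

lemma resolvent_eq_self_iff:
  fixes A :: "'a::{real_inner,complete_space} \<Rightarrow> 'a set"
  assumes "maximal_monotone A" and "lam > 0"
  shows "resolvent A lam x = x \<longleftrightarrow> 0 \<in> A x"
  using resolvent_in[OF assms, of x] resolvent_eqI[OF assms, of x x] by auto

lemma resolvent_complement_nonexpansive:
  fixes A :: "'a::{real_inner,complete_space} \<Rightarrow> 'a set"
  assumes "maximal_monotone A" and "lam > 0"
  shows "norm ((x - resolvent A lam x) - (y - resolvent A lam y)) \<le> dist x y"
proof -
  define u where "u = (x - resolvent A lam x) - (y - resolvent A lam y)"
  have "0 \<le> inner (resolvent A lam x - resolvent A lam y)
      ((1/lam) *\<^sub>R (x - resolvent A lam x) - (1/lam) *\<^sub>R (y - resolvent A lam y))"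
    using assms resolvent_in[OF assms] unfolding maximal_monotone_def monotone_operator_def by blast
  also have "\<dots> = (inner (x - y) u - inner u u) / lam"
  proof -
    have "resolvent A lam x - resolvent A lam y = (x - y) - u"
      and "(1/lam) *\<^sub>R (x - resolvent A lam x) - (1/lam) *\<^sub>R (y - resolvent A lam y) = (1/lam) *\<^sub>R u"
      unfolding u_def by (simp_all add: algebra_simps)
    then show ?thesis by (simp add: inner_diff_left)
  qed
  finally have "norm u * norm u \<le> inner (x - y) u"
    using \<open>lam > 0\<close> by (simp add: zero_le_divide_iff norm_eq_sqrt_inner)
  also have "\<dots> \<le> dist x y * norm u" unfolding dist_norm by (rule norm_cauchy_schwarz)
  finally have "norm u * norm u \<le> dist x y * norm u" .
  then show ?thesis unfolding u_def[symmetric]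
    by (cases "norm u = 0") (auto dest: mult_right_le_imp_le)
qed

definition resolvent_residual :: "('a::real_inner \<Rightarrow> 'a set) \<Rightarrow> real \<Rightarrow> 'a \<Rightarrow> real" where
  "resolvent_residual A lam x = norm (x - resolvent A lam x)"

lemma resolvent_residual_nonneg: "resolvent_residual A lam x \<ge> 0"
  unfolding resolvent_residual_def by simp

lemma resolvent_residual_eq_0_iff:
  fixes A :: "'a::{real_inner,complete_space} \<Rightarrow> 'a set"
  assumes "maximal_monotone A" and "lam > 0"
  shows "resolvent_residual A lam x = 0 \<longleftrightarrow> 0 \<in> A x"
proof -
  have "resolvent_residual A lam x = 0 \<longleftrightarrow> resolvent A lam x = x"
    unfolding resolvent_residual_def by (metis eq_iff_diff_eq_0 norm_eq_zero)
  then show ?thesis using resolvent_eq_self_iff[OF assms] by simp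
qed

lemma resolvent_residual_le_add_dist:
  fixes A :: "'a::{real_inner,complete_space} \<Rightarrow> 'a set"
  assumes "maximal_monotone A" and "lam > 0"
  shows "resolvent_residual A lam y \<le> resolvent_residual A lam x + dist x y"
  using resolvent_complement_nonexpansive[OF assms, of x y]
    norm_triangle_sub[of "y - resolvent A lam y" "x - resolvent A lam x"]
    norm_minus_commute[of "y - resolvent A lam y" "x - resolvent A lam x"]
  unfolding resolvent_residual_def by linarith

lemma weighted_square_ineq_imp_le:
  fixes a b mu lam :: real
  assumes "0 < mu" "mu \<le> lam" "0 \<le> a" "0 \<le> b"
    and ineq: "lam * b\<^sup>2 + mu * a\<^sup>2 \<le> (lam + mu) * (a * b)"
  shows "b \<le> a" and "mu * a \<le> lam * b"
proof -
  have key: "(lam * b - mu * a) * (b - a) \<le> 0"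
    using ineq by (simp add: algebra_simps power2_eq_square)
  show "b \<le> a"
  proof (rule ccontr)
    assume "\<not> b \<le> a"
    then have "lam * a < lam * b" using assms(1,2) by simp
    moreover have "mu * a \<le> lam * a" using assms(2,3) by (rule mult_right_mono)
    ultimately have "mu * a < lam * b" by linarith
    with \<open>\<not> b \<le> a\<close> have "0 < (lam * b - mu * a) * (b - a)" by simp
    with key show False by simp
  qed
  show "mu * a \<le> lam * b"
  proof (rule ccontr)
    assume "\<not> mu * a \<le> lam * b"
    moreover have "mu * b \<le> lam * b" using assms(2,4) by (rule mult_right_mono)
    ultimately have "mu * b < mu * a" by linarith
    then have "b < a" using \<open>0 < mu\<close> by simp
    with \<open>\<not> mu * a \<le> lam * b\<close> have "0 < (lam * b - mu * a) * (b - a)" by (simp add: mult_neg_neg)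
    with key show False by simp
  qed
qed

lemma resolvent_residual_mono:
  fixes A :: "'a::{real_inner,complete_space} \<Rightarrow> 'a set"
  assumes "maximal_monotone A" and "0 < mu" and "mu \<le> lam"
  shows "resolvent_residual A mu x \<le> resolvent_residual A lam x"
    and "mu * resolvent_residual A lam x \<le> lam * resolvent_residual A mu x"
proof -
  have "0 < lam" using assms(2,3) by simp
  define u where "u = x - resolvent A lam x"
  define v where "v = x - resolvent A mu x"
  have "0 \<le> inner (resolvent A lam x - resolvent A mu x) ((1/lam) *\<^sub>R u - (1/mu) *\<^sub>R v)"
    using assms(1) resolvent_in[OF assms(1) \<open>0 < lam\<close>] resolvent_in[OF assms(1) \<open>0 < mu\<close>]
    unfolding u_def v_def maximal_monotone_def monotone_operator_def by blast
  then have "0 \<le> (lam * mu) * inner (v - u) ((1/lam) *\<^sub>R u - (1/mu) *\<^sub>R v)"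
    using \<open>0 < lam\<close> \<open>0 < mu\<close> unfolding u_def v_def by simp
  also have "\<dots> = inner (v - u) (mu *\<^sub>R u - lam *\<^sub>R v)"
    using \<open>0 < lam\<close> \<open>0 < mu\<close> by (simp add: inner_diff_right algebra_simps)
  finally have "lam * inner v v + mu * inner u u \<le> (lam + mu) * inner u v"
    by (simp add: inner_diff_left inner_diff_right inner_commute algebra_simps)
  also have "\<dots> \<le> (lam + mu) * (norm u * norm v)"
    using \<open>0 < lam\<close> \<open>0 < mu\<close> by (intro mult_left_mono norm_cauchy_schwarz) auto
  finally have "lam * (norm v)\<^sup>2 + mu * (norm u)\<^sup>2 \<le> (lam + mu) * (norm u * norm v)"
    by (simp add: power2_norm_eq_inner)
  from weighted_square_ineq_imp_le[OF assms(2,3) norm_ge_zero norm_ge_zero this]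
  show "resolvent_residual A mu x \<le> resolvent_residual A lam x"
    and "mu * resolvent_residual A lam x \<le> lam * resolvent_residual A mu x"
    unfolding resolvent_residual_def u_def v_def by simp_all
qed

lemma lipschitz_on_resolvent_residual:
  fixes A :: "'a::{real_inner,complete_space} \<Rightarrow> 'a set"
  assumes "maximal_monotone A" and "0 < a"
  shows "(resolvent_residual A b x / a)-lipschitz_on {a..b} (\<lambda>lam. resolvent_residual A lam x)"
proof (rule lipschitz_onI)
  define r where "r lam = resolvent_residual A lam x" for lam
  have le: "r lam - r mu \<le> r b / a * (lam - mu)" if "mu \<in> {a..b}" "lam \<in> {a..b}" "mu \<le> lam" for mu lam
  proof -
    have "0 < mu" using that \<open>0 < a\<close> by simp
    have "a * (r lam - r mu) \<le> mu * (r lam - r mu)"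
      using that resolvent_residual_mono(1)[OF assms(1) \<open>0 < mu\<close>] unfolding r_def
      by (intro mult_right_mono) auto
    also have "\<dots> \<le> (lam - mu) * r mu"
      using resolvent_residual_mono(2)[OF assms(1) \<open>0 < mu\<close> \<open>mu \<le> lam\<close>] unfolding r_def
      by (simp add: algebra_simps)
    also have "\<dots> \<le> (lam - mu) * r b"
      using that resolvent_residual_mono(1)[OF assms(1) \<open>0 < mu\<close>] unfolding r_def
      by (intro mult_left_mono) auto
    finally show ?thesis using \<open>0 < a\<close> by (simp add: field_simps)
  qed
  have mono: "r mu \<le> r lam" if "mu \<in> {a..b}" "mu \<le> lam" for mu lam
    using that \<open>0 < a\<close> resolvent_residual_mono(1)[OF assms(1)] unfolding r_def by simp
  fix mu lam assume "mu \<in> {a..b}" "lam \<in> {a..b}"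
  then show "dist (r mu) (r lam) \<le> r b / a * dist mu lam"
    using le[of mu lam] le[of lam mu] mono[of mu lam] mono[of lam mu]
    by (cases "mu \<le> lam") (auto simp: dist_real_def abs_minus_commute)
next
  show "0 \<le> resolvent_residual A b x / a"
    by (rule divide_nonneg_pos[OF resolvent_residual_nonneg \<open>0 < a\<close>])
qed

lemma resolvent_residual_powr_strict_mono:
  fixes A :: "'a::{real_inner,complete_space} \<Rightarrow> 'a set"
  assumes "maximal_monotone A" and "0 \<notin> A x" and "q > 0" and "0 < mu" and "mu < lam"
  shows "mu powr q * resolvent_residual A mu x < lam powr q * resolvent_residual A lam x"
proof -
  have "0 < resolvent_residual A lam x"
    using resolvent_residual_eq_0_iff[of A lam x] resolvent_residual_nonneg[of A lam x] assms by force
  have "mu powr q * resolvent_residual A mu x \<le> mu powr q * resolvent_residual A lam x"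
    using resolvent_residual_mono(1)[OF assms(1,4)] assms(5) by (simp add: mult_left_mono)
  also have "\<dots> < lam powr q * resolvent_residual A lam x"
    using \<open>0 < resolvent_residual A lam x\<close> assms(3-5) by (simp add: powr_less_mono2)
  finally show ?thesis .
qed

lemma resolvent_residual_powr_ex1:
  fixes A :: "'a::{real_inner,complete_space} \<Rightarrow> 'a set"
  assumes "maximal_monotone A" and "0 \<notin> A x" and "q > 0" and "c > 0"
  shows "\<exists>!lam. lam > 0 \<and> lam powr q * resolvent_residual A lam x = c"
proof (rule ex_ex1I)
  define h where "h lam = lam powr q * resolvent_residual A lam x" for lam
  define r1 where "r1 = resolvent_residual A 1 x"
  have "r1 > 0"
    using resolvent_residual_eq_0_iff[of A 1 x] resolvent_residual_nonneg[of A 1 x] assms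
    unfolding r1_def by force
  define l where "l = (c / r1) powr (1 / q)"
  have "l > 0" and l_q: "l powr q * r1 = c"
    using \<open>r1 > 0\<close> \<open>c > 0\<close> \<open>q > 0\<close> unfolding l_def by (simp_all add: powr_powr)
  have "h (min 1 l) \<le> c"
  proof -
    have "h (min 1 l) \<le> l powr q * r1"
      unfolding h_def r1_def using \<open>l > 0\<close> \<open>q > 0\<close>
      by (intro mult_mono powr_mono2 resolvent_residual_mono(1)[OF assms(1)] resolvent_residual_nonneg)
        auto
    then show ?thesis using l_q by simp
  qed
  moreover have "c \<le> h (max 1 l)"
  proof -
    have "l powr q * r1 \<le> h (max 1 l)"
      unfolding h_def r1_def using \<open>l > 0\<close> \<open>q > 0\<close>
      by (intro mult_mono powr_mono2 resolvent_residual_mono(1)[OF assms(1)] resolvent_residual_nonneg)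
        auto
    then show ?thesis using l_q by simp
  qed
  moreover have "continuous_on {min 1 l..max 1 l} h"
    unfolding h_def using \<open>l > 0\<close>
    by (intro continuous_intros lipschitz_on_continuous_on[OF lipschitz_on_resolvent_residual[OF assms(1)]])
      auto
  moreover have "min 1 l \<le> max 1 l" by simp
  ultimately obtain lam where "min 1 l \<le> lam" "h lam = c"
    using IVT'[of h "min 1 l" c "max 1 l"] by auto
  then show "\<exists>lam. lam > 0 \<and> lam powr q * resolvent_residual A lam x = c"
    using \<open>l > 0\<close> unfolding h_def by (intro exI[of _ lam]) auto
next
  fix lam mu
  assume "lam > 0 \<and> lam powr q * resolvent_residual A lam x = c"
    and "mu > 0 \<and> mu powr q * resolvent_residual A mu x = c"
  then show "lam = mu"
    using resolvent_residual_powr_strict_mono[OF assms(1-3), of lam mu]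
      resolvent_residual_powr_strict_mono[OF assms(1-3), of mu lam]
    by (cases lam mu rule: linorder_cases) auto
qed

section \<open>The functions \<open>\<Lambda>\<^sub>\<theta>\<close> and \<open>\<Gamma>\<^sub>\<theta>\<close>\<close>

lemma Lambda_theta_spec:
  fixes A :: "'a::{real_inner,complete_space} \<Rightarrow> 'a set"
  assumes "maximal_monotone A" and "p \<ge> 2" and "\<theta> > 0" and "0 \<notin> A x"
  shows "Lambda_theta A p \<theta> x > 0"
    and "Lambda_theta A p \<theta> x powr (1 / (real p - 1)) * resolvent_residual A (Lambda_theta A p \<theta> x) x
      = \<theta> powr (1 / (real p - 1))"
proof -
  have "\<exists>!lam. lam > 0 \<and> lam powr (1 / (real p - 1)) * resolvent_residual A lam x = \<theta> powr (1 / (real p - 1))"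
    using assms by (intro resolvent_residual_powr_ex1) auto
  then have "Lambda_theta A p \<theta> x > 0 \<and> Lambda_theta A p \<theta> x powr (1 / (real p - 1))
      * resolvent_residual A (Lambda_theta A p \<theta> x) x = \<theta> powr (1 / (real p - 1))"
    unfolding Lambda_theta_def resolvent_residual_def by (rule theI')
  then show "Lambda_theta A p \<theta> x > 0"
    and "Lambda_theta A p \<theta> x powr (1 / (real p - 1)) * resolvent_residual A (Lambda_theta A p \<theta> x) x
      = \<theta> powr (1 / (real p - 1))"
    by auto
qed

lemma le_Lambda_theta_iff:
  fixes A :: "'a::{real_inner,complete_space} \<Rightarrow> 'a set"
  assumes "maximal_monotone A" and "p \<ge> 2" and "\<theta> > 0" and "0 \<notin> A x" and "lam > 0"
  shows "lam powr (1 / (real p - 1)) * resolvent_residual A lam x \<le> \<theta> powr (1 / (real p - 1))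
    \<longleftrightarrow> lam \<le> Lambda_theta A p \<theta> x"
  using resolvent_residual_powr_strict_mono[OF assms(1,4), of "1 / (real p - 1)" lam "Lambda_theta A p \<theta> x"]
    resolvent_residual_powr_strict_mono[OF assms(1,4), of "1 / (real p - 1)" "Lambda_theta A p \<theta> x" lam]
    Lambda_theta_spec[OF assms(1-4)] assms(2,5)
  by (cases lam "Lambda_theta A p \<theta> x" rule: linorder_cases) auto

lemma Gamma_theta_le_powr:
  assumes "p \<ge> 2" and "\<alpha> > 0"
    and "resolvent_residual A (1 / \<alpha>) y \<le> \<alpha> powr (1 / (real p - 1)) * \<theta> powr (1 / (real p - 1))"
  shows "Gamma_theta A p \<theta> y \<le> \<alpha> powr (1 / (real p - 1))"
proof -
  define S where "S = {\<alpha>::real. \<alpha> > 0 \<and>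
    norm (y - resolvent A (1 / \<alpha>) y) \<le> \<alpha> powr (1 / (real p - 1)) * \<theta> powr (1 / (real p - 1))}"
  have "\<alpha> \<in> S" using assms(2,3) unfolding S_def resolvent_residual_def by simp
  moreover have "bdd_below S" unfolding S_def by (rule bdd_belowI[of _ 0]) auto
  ultimately have "Inf S \<le> \<alpha>" by (rule cInf_lower)
  have "0 \<le> Inf S" using \<open>\<alpha> \<in> S\<close> by (intro cInf_greatest) (auto simp: S_def)
  moreover have "0 \<le> 1 / (real p - 1)" using assms(1) by simp
  ultimately show ?thesis using \<open>Inf S \<le> \<alpha>\<close>
    unfolding Gamma_theta_def S_def[symmetric] by (simp add: powr_mono2)
qed

lemma Gamma_theta_eq:
  fixes A :: "'a::{real_inner,complete_space} \<Rightarrow> 'a set"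
  assumes "maximal_monotone A" and "p \<ge> 2" and "\<theta> > 0"
  shows "Gamma_theta A p \<theta> x =
    (if 0 \<notin> A x then (1 / Lambda_theta A p \<theta> x) powr (1 / (real p - 1)) else 0)"
proof -
  define q where "q = 1 / (real p - 1)"
  have "q > 0" unfolding q_def using assms(2) by simp
  define S where "S = {\<alpha>::real. \<alpha> > 0 \<and> resolvent_residual A (1 / \<alpha>) x \<le> \<alpha> powr q * \<theta> powr q}"
  have Gamma: "Gamma_theta A p \<theta> x = Inf S powr q"
    unfolding Gamma_theta_def S_def q_def resolvent_residual_def ..
  show ?thesis
  proof (cases "0 \<in> A x")
    case True
    then have "resolvent_residual A (1 / \<alpha>) x = 0" if "\<alpha> > 0" for \<alpha>
      using resolvent_residual_eq_0_iff[OF assms(1), of "1 / \<alpha>" x] that by simp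
    then have "S = {0<..}" unfolding S_def by auto
    then show ?thesis using Gamma True by simp
  next
    case False
    define \<Lambda> where "\<Lambda> = Lambda_theta A p \<theta> x"
    have "\<Lambda> > 0" unfolding \<Lambda>_def using Lambda_theta_spec(1)[OF assms False] .
    have "\<alpha> \<in> S \<longleftrightarrow> 1 / \<Lambda> \<le> \<alpha>" for \<alpha>
    proof (cases "\<alpha> > 0")
      case True
      have "\<alpha> \<in> S \<longleftrightarrow> (1 / \<alpha>) powr q * resolvent_residual A (1 / \<alpha>) x \<le> \<theta> powr q"
        unfolding S_def using True by (simp add: powr_divide field_simps)
      also have "\<dots> \<longleftrightarrow> 1 / \<alpha> \<le> \<Lambda>"
        unfolding q_def \<Lambda>_def using True by (intro le_Lambda_theta_iff[OF assms False]) simp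
      also have "\<dots> \<longleftrightarrow> 1 / \<Lambda> \<le> \<alpha>" using True \<open>\<Lambda> > 0\<close> by (simp add: field_simps)
      finally show ?thesis .
    next
      case False
      moreover have "0 < 1 / \<Lambda>" using \<open>\<Lambda> > 0\<close> by simp
      ultimately have "\<not> 1 / \<Lambda> \<le> \<alpha>" by linarith
      then show ?thesis unfolding S_def using False by simp
    qed
    then have "S = {1 / \<Lambda>..}" by auto
    then show ?thesis using Gamma False unfolding \<Lambda>_def q_def by simp
  qed
qed

lemma Gamma_theta_nonneg: "Gamma_theta A p \<theta> x \<ge> 0"
  unfolding Gamma_theta_def by simp

lemma resolvent_residual_le_Gamma_theta:
  fixes A :: "'a::{real_inner,complete_space} \<Rightarrow> 'a set"
  assumes "maximal_monotone A" and "p \<ge> 2" and "\<theta> > 0" and "\<alpha> > 0"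
    and "Gamma_theta A p \<theta> x \<le> \<alpha> powr (1 / (real p - 1))"
  shows "resolvent_residual A (1 / \<alpha>) x \<le> \<theta> powr (1 / (real p - 1)) * Gamma_theta A p \<theta> x"
proof (cases "0 \<in> A x")
  case True
  then have "resolvent_residual A (1 / \<alpha>) x = 0"
    using resolvent_residual_eq_0_iff[OF assms(1), of "1 / \<alpha>" x] assms(4) by simp
  then show ?thesis using Gamma_theta_nonneg[of A p \<theta> x] by simp
next
  case False
  define q where "q = 1 / (real p - 1)"
  have "q > 0" unfolding q_def using assms(2) by simp
  define \<Lambda> where "\<Lambda> = Lambda_theta A p \<theta> x"
  have "\<Lambda> > 0" and \<Lambda>_eq: "\<Lambda> powr q * resolvent_residual A \<Lambda> x = \<theta> powr q"
    unfolding \<Lambda>_def q_def using Lambda_theta_spec[OF assms(1-3) False] by auto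
  have Gamma: "Gamma_theta A p \<theta> x = (1 / \<Lambda>) powr q"
    unfolding \<Lambda>_def q_def using Gamma_theta_eq[OF assms(1-3)] False by simp
  have "1 / \<Lambda> \<le> \<alpha>"
  proof (rule ccontr)
    assume "\<not> 1 / \<Lambda> \<le> \<alpha>"
    then have "\<alpha> powr q < (1 / \<Lambda>) powr q" using \<open>q > 0\<close> assms(4) by (simp add: powr_less_mono2)
    with assms(5) show False unfolding Gamma q_def by simp
  qed
  then have "resolvent_residual A (1 / \<alpha>) x \<le> resolvent_residual A \<Lambda> x"
    using assms(4) \<open>\<Lambda> > 0\<close> by (intro resolvent_residual_mono(1)[OF assms(1)]) (auto simp: field_simps)
  also have "\<dots> = \<theta> powr q * (1 / \<Lambda>) powr q"
    using \<Lambda>_eq \<open>\<Lambda> > 0\<close> by (simp add: powr_divide field_simps)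
  finally show ?thesis unfolding Gamma q_def .
qed

lemma Gamma_theta_le_add_dist:
  fixes A :: "'a::{real_inner,complete_space} \<Rightarrow> 'a set"
  assumes "maximal_monotone A" and "p \<ge> 2" and "\<theta> > 0"
  shows "Gamma_theta A p \<theta> y \<le> Gamma_theta A p \<theta> x + \<theta> powr (- 1 / (real p - 1)) * dist x y"
proof (cases "x = y")
  case False
  define q where "q = 1 / (real p - 1)"
  have "q > 0" unfolding q_def using assms(2) by simp
  define T where "T = Gamma_theta A p \<theta> x + \<theta> powr (- 1 / (real p - 1)) * dist x y"
  have "T > 0"
    unfolding T_def using Gamma_theta_nonneg[of A p \<theta> x] \<open>\<theta> > 0\<close> False
    by (simp add: add_nonneg_pos)
  define \<alpha> where "\<alpha> = T powr (1 / q)"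
  have "\<alpha> > 0" and \<alpha>_q: "\<alpha> powr q = T"
    unfolding \<alpha>_def using \<open>T > 0\<close> \<open>q > 0\<close> by (simp_all add: powr_powr)
  have "\<theta> powr q * \<theta> powr (- 1 / (real p - 1)) = 1"
    unfolding q_def using \<open>\<theta> > 0\<close> by (simp add: powr_add[symmetric])
  then have \<theta>_T: "\<theta> powr q * T = \<theta> powr q * Gamma_theta A p \<theta> x + dist x y"
    unfolding T_def by (simp add: algebra_simps)
  have "Gamma_theta A p \<theta> x \<le> \<alpha> powr q"
    unfolding \<alpha>_q T_def using \<open>\<theta> > 0\<close> by simp
  then have "resolvent_residual A (1 / \<alpha>) x \<le> \<theta> powr q * Gamma_theta A p \<theta> x"
    unfolding q_def by (rule resolvent_residual_le_Gamma_theta[OF assms \<open>\<alpha> > 0\<close>])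
  then have "resolvent_residual A (1 / \<alpha>) y \<le> \<alpha> powr q * \<theta> powr q"
    using resolvent_residual_le_add_dist[OF assms(1), of "1 / \<alpha>" y x] \<open>\<alpha> > 0\<close>
    unfolding \<alpha>_q mult.commute[of T] \<theta>_T by simp
  then have "Gamma_theta A p \<theta> y \<le> \<alpha> powr q"
    unfolding q_def by (rule Gamma_theta_le_powr[OF assms(2) \<open>\<alpha> > 0\<close>])
  then show ?thesis unfolding \<alpha>_q T_def .
qed simp

theorem lemma2p3:
  fixes A :: "'a::{real_inner, complete_space} \<Rightarrow> 'a set"
    and p :: nat and \<theta> :: real
  assumes "maximal_monotone A"
    and "p \<ge> 2"
    and "0 < \<theta>" and "\<theta> < 1"
  shows "(\<forall>x. Gamma_theta A p \<theta> x =
            (if 0 \<notin> A x then (1 / Lambda_theta A p \<theta> x) powr (1 / (real p - 1)) else 0))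
         \<and> (\<theta> powr (- 1 / (real p - 1)))-lipschitz_on UNIV (Gamma_theta A p \<theta>)"
proof
  show "\<forall>x. Gamma_theta A p \<theta> x =
      (if 0 \<notin> A x then (1 / Lambda_theta A p \<theta> x) powr (1 / (real p - 1)) else 0)"
    using Gamma_theta_eq[OF assms(1-3)] by blast
  show "(\<theta> powr (- 1 / (real p - 1)))-lipschitz_on UNIV (Gamma_theta A p \<theta>)"
  proof (rule lipschitz_onI)
    fix x y :: 'a
    show "dist (Gamma_theta A p \<theta> x) (Gamma_theta A p \<theta> y) \<le> \<theta> powr (- 1 / (real p - 1)) * dist x y"
      using Gamma_theta_le_add_dist[OF assms(1-3), of x y] Gamma_theta_le_add_dist[OF assms(1-3), of y x]
      by (simp add: dist_real_def dist_commute abs_le_iff)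
  qed simp
qed

end
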